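(* Let $(X,S_b)$ be an $S_b$-metric space with $b\geq 1$, let $x_1,x_2\in X$, and let $f:X\to X$ be a self-mapping for which there exist $\alpha\in(0,1)$ and a non-decreasing function $\varphi:(0,\infty)\to(1,\infty)$ such that for all $x\in X\setminus\{x_1,x_2\}$, $$S_b(x,x,fx)>0 \implies \varphi\big(S_b(x,x,fx)\big)\leq \left[\varphi\left(\frac{S_b(x,x,x_1)}{S_b(x,x,x_2)}\right)\right]^{\alpha}$$ (i.e. $f$ is a Jleli-Samet type $A_{x_1,x_2}$-$S_b$-contraction). Let $$r=\inf\{S_b(x,x,fx): x\neq fx,\ x\in X\}.$$ If $fx_1=x_1$ and $fx_2=x_2$, then $f$ fixes the Apollonius circle $A^{S_b}_r(x_1,x_2)=\left\{x\in X\setminus\{x_2\}: \frac{S_b(x,x,x_1)}{S_b(x,x,x_2)}=r\right\}$, i.e. $fx=x$ for every $x\in A^{S_b}_r(x_1,x_2)$.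
   Context: An $S_b$-metric space $(X,S_b)$ with constant $b\geq 1$ is a nonempty set $X$ with a function $S_b:X\times X\times X\to[0,\infty)$ such that for all $x,y,z,a\in X$: (1) $S_b(x,y,z)=0$ if and only if $x=y=z$; (2) $S_b(x,y,z)\leq b[S_b(x,x,a)+S_b(y,y,a)+S_b(z,z,a)]$. A mapping $f$ fixes a set $\mathcal{F}\subseteq X$ if $\mathcal{F}$ is contained in the fixed point set $\{x\in X: fx=x\}$. *)

theory Defs
  imports Complex_Main
begin

definition Sb_metric_space :: "'a set \<Rightarrow> ('a \<Rightarrow> 'a \<Rightarrow> 'a \<Rightarrow> real) \<Rightarrow> real \<Rightarrow> bool" where
  "Sb_metric_space X S b \<longleftrightarrow> X \<noteq> {} \<and> b \<ge> 1 \<and>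
     (\<forall>x\<in>X. \<forall>y\<in>X. \<forall>z\<in>X. S x y z \<ge> 0) \<and>
     (\<forall>x\<in>X. \<forall>y\<in>X. \<forall>z\<in>X. S x y z = 0 \<longleftrightarrow> x = y \<and> y = z) \<and>
     (\<forall>x\<in>X. \<forall>y\<in>X. \<forall>z\<in>X. \<forall>a\<in>X.
        S x y z \<le> b * (S x x a + S y y a + S z z a))"

definition JS_A_Sb_contraction ::
  "'a set \<Rightarrow> ('a \<Rightarrow> 'a \<Rightarrow> 'a \<Rightarrow> real) \<Rightarrow> ('a \<Rightarrow> 'a) \<Rightarrow> 'a \<Rightarrow> 'a \<Rightarrow> real \<Rightarrow> (real \<Rightarrow> real) \<Rightarrow> bool" where
  "JS_A_Sb_contraction X S f x1 x2 \<alpha> \<phi> \<longleftrightarrow>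
     0 < \<alpha> \<and> \<alpha> < 1 \<and> mono_on {0<..} \<phi> \<and> (\<forall>t>0. \<phi> t > 1) \<and>
     (\<forall>x \<in> X - {x1, x2}. S x x (f x) > 0 \<longrightarrow>
        \<phi> (S x x (f x)) \<le> (\<phi> (S x x x1 / S x x x2)) powr \<alpha>)"

definition apollonius_circle ::
  "'a set \<Rightarrow> ('a \<Rightarrow> 'a \<Rightarrow> 'a \<Rightarrow> real) \<Rightarrow> real \<Rightarrow> 'a \<Rightarrow> 'a \<Rightarrow> 'a set" where
  "apollonius_circle X S r x1 x2 = {x \<in> X - {x2}. S x x x1 / S x x x2 = r}"

end

theory Submission
  imports Defs
begin

text \<open>If a point x of the circle were not fixed, then r \<le> S x x (f x) by the choice of r, and the
  contraction condition would give
  \<phi> (S x x (f x)) \<le> \<phi> r powr \<alpha> < \<phi> r \<le> \<phi> (S x x (f x)),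
  the strict step because \<phi> r > 1 and \<alpha> < 1.\<close>

lemma Sb_metric_space_nonneg:
  "Sb_metric_space X S b \<Longrightarrow> x \<in> X \<Longrightarrow> y \<in> X \<Longrightarrow> z \<in> X \<Longrightarrow> 0 \<le> S x y z"
  by (simp add: Sb_metric_space_def)

lemma Sb_metric_space_pos:
  assumes "Sb_metric_space X S b" "x \<in> X" "y \<in> X" "x \<noteq> y"
  shows "0 < S x x y"
proof -
  have "S x x y \<noteq> 0"
    using assms by (simp add: Sb_metric_space_def)
  with Sb_metric_space_nonneg[OF assms(1,2,2,3)] show ?thesis by simp
qed

lemma Sb_metric_space_Inf_displacement_le:
  assumes "Sb_metric_space X S b" "\<forall>x\<in>X. f x \<in> X" "x \<in> X" "x \<noteq> f x"
  shows "Inf {S x x (f x) | x. x \<in> X \<and> x \<noteq> f x} \<le> S x x (f x)"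
proof (rule cInf_lower)
  show "S x x (f x) \<in> {S x x (f x) | x. x \<in> X \<and> x \<noteq> f x}"
    using assms(3,4) by auto
  show "bdd_below {S x x (f x) | x. x \<in> X \<and> x \<noteq> f x}"
  proof (rule bdd_belowI)
    fix s assume "s \<in> {S x x (f x) | x. x \<in> X \<and> x \<noteq> f x}"
    then show "0 \<le> s"
      using Sb_metric_space_nonneg[OF assms(1)] assms(2) by auto
  qed
qed

lemma mono_gt_one_powr_less:
  fixes \<phi> :: "real \<Rightarrow> real"
  assumes "mono_on {0<..} \<phi>" "\<forall>t>0. \<phi> t > 1" "\<alpha> < 1" "0 < r" "r \<le> s"
  shows "\<phi> r powr \<alpha> < \<phi> s"
proof -
  have "\<phi> r > 1" using assms(2,4) by auto
  then have "\<phi> r powr \<alpha> < \<phi> r powr 1"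
    using assms(3) by (intro powr_less_mono) auto
  also have "\<dots> \<le> \<phi> s"
    using assms(1,4,5) \<open>\<phi> r > 1\<close> by (auto intro: mono_onD)
  finally show ?thesis .
qed

lemma JS_A_Sb_contractionD:
  assumes "JS_A_Sb_contraction X S f x1 x2 \<alpha> \<phi>"
  shows "\<alpha> < 1" and "mono_on {0<..} \<phi>" and "\<forall>t>0. \<phi> t > 1"
    and "\<lbrakk>x \<in> X; x \<noteq> x1; x \<noteq> x2; 0 < S x x (f x)\<rbrakk>
      \<Longrightarrow> \<phi> (S x x (f x)) \<le> \<phi> (S x x x1 / S x x x2) powr \<alpha>"
  using assms by (simp_all add: JS_A_Sb_contraction_def)

theorem theorem2p17:
  fixes X :: "'a set" and S :: "'a \<Rightarrow> 'a \<Rightarrow> 'a \<Rightarrow> real" and b :: real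
    and f :: "'a \<Rightarrow> 'a" and x1 x2 :: 'a and \<alpha> r :: real and \<phi> :: "real \<Rightarrow> real"
  assumes "Sb_metric_space X S b"
    and "x1 \<in> X" and "x2 \<in> X"
    and "\<forall>x\<in>X. f x \<in> X"
    and "JS_A_Sb_contraction X S f x1 x2 \<alpha> \<phi>"
    and "r = Inf {S x x (f x) | x. x \<in> X \<and> x \<noteq> f x}"
    and "f x1 = x1" and "f x2 = x2"
  shows "\<forall>x \<in> apollonius_circle X S r x1 x2. f x = x"
proof (rule ballI, rule ccontr)
  fix x assume "x \<in> apollonius_circle X S r x1 x2" and moved: "f x \<noteq> x"
  then have x: "x \<in> X" "x \<noteq> x2" and ratio: "S x x x1 / S x x x2 = r"
    by (auto simp: apollonius_circle_def)
  have "x \<noteq> x1" using moved assms(7) by auto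
  have "0 < S x x x1" "0 < S x x x2"
    using Sb_metric_space_pos[OF assms(1)] assms(2,3) x \<open>x \<noteq> x1\<close> by auto
  then have r_pos: "0 < r"
    unfolding ratio[symmetric] by simp
  have displacement_pos: "0 < S x x (f x)"
    using Sb_metric_space_pos[OF assms(1)] assms(4) x moved by simp
  have "\<phi> (S x x (f x)) \<le> \<phi> r powr \<alpha>"
    using JS_A_Sb_contractionD(4)[OF assms(5) x(1) \<open>x \<noteq> x1\<close> x(2) displacement_pos]
    unfolding ratio .
  moreover have "r \<le> S x x (f x)"
    unfolding assms(6)
    using Sb_metric_space_Inf_displacement_le[OF assms(1,4) x(1) moved[symmetric]] .
  then have "\<phi> r powr \<alpha> < \<phi> (S x x (f x))"
    using mono_gt_one_powr_less JS_A_Sb_contractionD(1-3)[OF assms(5)] r_pos by blast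
  ultimately show False by simp
qed

end
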